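(* Let $q\ge5$ be coprime to $6$, let $\chi$ be a real primitive Dirichlet character of conductor $q$, and let $f:\mathbb{N}\to\{-1,1\}$ be a multiplicative function with $\mathbb{D}(f,\chi;\infty)<\infty$. If $S\subset\{0,1,2,3\}$ has size $2$ or $3$, then $\Xi_{\boldsymbol a}(S)=0$ for any vector $\boldsymbol a=(a_j)_{j\in S}$ of divisors of $q$.
   Context: $\mathbb{D}(f,g;\infty)^2=\lim_{x\to\infty}\sum_{p\le x}\frac{1-\mathrm{Re}(f(p)\overline{g(p)})}{p}$. For $S\subseteq\{0,1,2,3\}$ and $\boldsymbol a=(a_j)_{j\in S}$, $\Xi_{\boldsymbol a}(S):=\sum\prod_{j\in S}\chi(b_j)$, the sum over residues $(b_j)_{j\in S}$ mod $q$ for which there exist integers $n,d$ with $a_j\mid n+jd$ and $(n+jd)/a_j\equiv b_j\pmod q$ for all $j\in S$. *)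

theory Defs
  imports "HOL-Analysis.Analysis" "HOL-Number_Theory.Number_Theory" "HOL-Library.FuncSet"
begin

definition dirichlet_char :: "nat \<Rightarrow> (int \<Rightarrow> complex) \<Rightarrow> bool" where
  "dirichlet_char q chi \<longleftrightarrow> q > 0 \<and>
     (\<forall>n. chi (n + int q) = chi n) \<and>
     (\<forall>m n. chi (m * n) = chi m * chi n) \<and>
     chi 1 = 1 \<and>
     (\<forall>n. chi n = 0 \<longleftrightarrow> \<not> coprime n (int q))"

text \<open>Primitive modulo q (i.e. of conductor q): not induced by a character of any
  proper modulus d dividing q.\<close>
definition primitive_dirichlet_char :: "nat \<Rightarrow> (int \<Rightarrow> complex) \<Rightarrow> bool" where
  "primitive_dirichlet_char q chi \<longleftrightarrow> dirichlet_char q chi \<and>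
     (\<forall>d. d dvd q \<and> d < q \<longrightarrow>
        (\<exists>n. coprime n (int q) \<and> [n = 1] (mod int d) \<and> chi n \<noteq> 1))"

definition real_char :: "(int \<Rightarrow> complex) \<Rightarrow> bool" where
  "real_char chi \<longleftrightarrow> (\<forall>n. chi n \<in> \<real>)"

definition multiplicative_fn :: "(nat \<Rightarrow> int) \<Rightarrow> bool" where
  "multiplicative_fn f \<longleftrightarrow> f 1 = 1 \<and> (\<forall>m n. coprime m n \<longrightarrow> f (m * n) = f m * f n)"

definition pdist_sq :: "(nat \<Rightarrow> complex) \<Rightarrow> (nat \<Rightarrow> complex) \<Rightarrow> nat \<Rightarrow> real" where
  "pdist_sq f g x = (\<Sum>p | prime p \<and> p \<le> x. (1 - Re (f p * cnj (g p))) / real p)"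

definition pdist_finite :: "(nat \<Rightarrow> complex) \<Rightarrow> (nat \<Rightarrow> complex) \<Rightarrow> bool" where
  "pdist_finite f g \<longleftrightarrow> (\<exists>L. (pdist_sq f g \<longlongrightarrow> L) at_top)"

definition admissible :: "nat \<Rightarrow> nat set \<Rightarrow> (nat \<Rightarrow> int) \<Rightarrow> (nat \<Rightarrow> int) \<Rightarrow> bool" where
  "admissible q S a b \<longleftrightarrow> (\<exists>n d :: int. \<forall>j\<in>S.
      a j dvd (n + int j * d) \<and> [(n + int j * d) div a j = b j] (mod int q))"

definition Xi :: "nat \<Rightarrow> (int \<Rightarrow> complex) \<Rightarrow> nat set \<Rightarrow> (nat \<Rightarrow> int) \<Rightarrow> complex" where
  "Xi q chi S a = (\<Sum>b \<in> {b \<in> PiE S (\<lambda>_. {0..<int q}). admissible q S a b}.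
                    \<Prod>j\<in>S. chi (b j))"

end

theory Submission
  imports Defs
begin

text \<open>A real primitive character of modulus q > 1 takes the value -1 at some t. Multiplying
  the coordinates of residue vectors in a set T by t (mod q) is injective and multiplies the
  product of the character values by (-1)^|T|, so a sum over a set of vectors closed under
  this scaling vanishes when |T| is odd. For |S| = 3 take T = S: scaling n and d by t keeps
  a vector admissible. For |S| = 2 every vector is admissible, since the difference of the
  two positions is coprime to q, and T can be a single position.\<close>

lemma dirichlet_char_periodic:
  assumes "dirichlet_char q chi"
  shows "chi (n + int q * k) = chi n"
proof (induction k rule: int_induct[where k = 0])
  case base
  show ?case by simp
next
  case (step1 i)
  have "chi (n + int q * (i + 1)) = chi ((n + int q * i) + int q)"
    by (simp add: algebra_simps)
  with step1 assms show ?case unfolding dirichlet_char_def by metis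
next
  case (step2 i)
  have "chi (n + int q * i) = chi ((n + int q * (i - 1)) + int q)"
    by (simp add: algebra_simps)
  with step2 assms show ?case unfolding dirichlet_char_def by metis
qed

lemma dirichlet_char_cong:
  assumes "dirichlet_char q chi" "[m = n] (mod int q)"
  shows "chi m = chi n"
  using assms(2) dirichlet_char_periodic[OF assms(1)] by (metis cong_iff_lin)

lemma dirichlet_char_mult:
  assumes "dirichlet_char q chi"
  shows "chi (m * n) = chi m * chi n"
  using assms unfolding dirichlet_char_def by blast

lemma dirichlet_char_power:
  assumes "dirichlet_char q chi"
  shows "chi (m ^ k) = chi m ^ k"
  by (induction k) (use assms in \<open>auto simp: dirichlet_char_def\<close>)

lemma dirichlet_char_eq_0_iff:
  assumes "dirichlet_char q chi"
  shows "chi n = 0 \<longleftrightarrow> \<not> coprime n (int q)"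
  using assms unfolding dirichlet_char_def by blast

lemma dirichlet_char_mod:
  assumes "dirichlet_char q chi"
  shows "chi (n mod int q) = chi n"
  by (rule dirichlet_char_cong[OF assms]) (simp add: cong_def)

lemma real_dirichlet_char_unit_values:
  assumes "dirichlet_char q chi" "real_char chi" "coprime n (int q)"
  shows "chi n = 1 \<or> chi n = -1"
proof -
  have "[n ^ totient q = 1] (mod int q)"
  proof (cases "q = 1")
    case False
    then have "residues (int q)"
      using assms(1) unfolding dirichlet_char_def residues_def by simp
    then show ?thesis using residues.euler_theorem[OF _ assms(3)] by simp
  qed simp
  then have "chi n ^ totient q = 1"
    using dirichlet_char_cong[OF assms(1)] dirichlet_char_power[OF assms(1)] assms(1)
    unfolding dirichlet_char_def by metis
  moreover obtain r where r: "chi n = of_real r"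
    using assms(2) unfolding real_char_def by (metis Reals_cases)
  moreover have "totient q > 0"
    using assms(1) unfolding dirichlet_char_def by simp
  ultimately have "\<bar>r\<bar> ^ totient q = 1 ^ totient q"
    by (metis of_real_eq_1_iff of_real_power power_abs abs_one power_one)
  then have "\<bar>r\<bar> = 1"
    using \<open>totient q > 0\<close> power_eq_imp_eq_base[of "\<bar>r\<bar>" "totient q" 1] by simp
  then show ?thesis using r by (auto simp: abs_if split: if_splits)
qed

lemma real_primitive_char_has_minus_one:
  assumes "primitive_dirichlet_char q chi" "real_char chi" "q \<ge> 2"
  obtains t where "chi t = -1"
proof -
  have dc: "dirichlet_char q chi"
    using assms(1) unfolding primitive_dirichlet_char_def by blast
  obtain n where "coprime n (int q)" "chi n \<noteq> 1"
    using assms(1,3) unfolding primitive_dirichlet_char_def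
    by (metis one_dvd less_le_trans one_less_numeral_iff semiring_norm(76))
  with real_dirichlet_char_unit_values[OF dc assms(2)] that show ?thesis by blast
qed

definition scale_residues :: "nat \<Rightarrow> int \<Rightarrow> nat set \<Rightarrow> (nat \<Rightarrow> int) \<Rightarrow> nat \<Rightarrow> int" where
  "scale_residues q t T b j = (if j \<in> T then (t * b j) mod int q else b j)"

lemma scale_residues_in_PiE:
  assumes "q > 0" "T \<subseteq> S" "b \<in> PiE S (\<lambda>_. {0..<int q})"
  shows "scale_residues q t T b \<in> PiE S (\<lambda>_. {0..<int q})"
  using assms by (auto simp: scale_residues_def PiE_iff extensional_def)

lemma inj_on_scale_residues:
  assumes "coprime t (int q)" "T \<subseteq> S"
  shows "inj_on (scale_residues q t T) (PiE S (\<lambda>_. {0..<int q}))"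
proof (rule inj_onI, rule ext)
  fix b c j
  assume b: "b \<in> PiE S (\<lambda>_. {0..<int q})" and c: "c \<in> PiE S (\<lambda>_. {0..<int q})"
    and eq: "scale_residues q t T b = scale_residues q t T c"
  show "b j = c j"
  proof (cases "j \<in> T")
    case True
    with eq have "[t * b j = t * c j] (mod int q)"
      unfolding cong_def by (metis scale_residues_def)
    then have "[b j = c j] (mod int q)" using cong_mult_lcancel[OF assms(1)] by blast
    moreover have "b j \<in> {0..<int q}" "c j \<in> {0..<int q}"
      using True assms(2) b c by (auto simp: PiE_iff)
    ultimately show ?thesis using cong_less_imp_eq_int by auto
  next
    case False
    with eq show ?thesis by (metis scale_residues_def)
  qed
qed

lemma prod_char_scale_residues:
  assumes "dirichlet_char q chi" "chi t = -1" "finite S" "T \<subseteq> S"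
  shows "(\<Prod>j\<in>S. chi (scale_residues q t T b j)) = (-1) ^ card T * (\<Prod>j\<in>S. chi (b j))"
proof -
  have "(\<Prod>j\<in>S. chi (scale_residues q t T b j)) = (\<Prod>j\<in>S. (if j \<in> T then -1 else 1) * chi (b j))"
    using dirichlet_char_mod[OF assms(1)] dirichlet_char_mult[OF assms(1)] assms(2)
    by (intro prod.cong) (auto simp: scale_residues_def)
  also have "\<dots> = (-1) ^ card T * (\<Prod>j\<in>S. chi (b j))"
    using assms(3,4) by (simp add: prod.distrib prod.If_cases Int_absorb1)
  finally show ?thesis .
qed

lemma sum_eq_0_if_sign_reversing_injection:
  fixes F :: "'a \<Rightarrow> 'b::real_vector"
  assumes "finite A" "g ` A \<subseteq> A" "inj_on g A" "\<And>b. b \<in> A \<Longrightarrow> F (g b) = - F b"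
  shows "sum F A = 0"
proof -
  have "sum F A = sum F (g ` A)" using endo_inj_surj[OF assms(1-3)] by simp
  also have "\<dots> = sum (\<lambda>b. - F b) A" using assms(3,4) by (simp add: sum.reindex)
  finally have "scaleR 2 (sum F A) = 0" by (simp add: sum_negf eq_neg_iff_add_eq_0 scaleR_2)
  then show ?thesis by simp
qed

lemma sum_prod_char_eq_0_if_scaling_closed:
  assumes "dirichlet_char q chi" "chi t = -1" "finite S" "T \<subseteq> S" "odd (card T)"
    and "A \<subseteq> PiE S (\<lambda>_. {0..<int q})" "scale_residues q t T ` A \<subseteq> A"
  shows "(\<Sum>b\<in>A. \<Prod>j\<in>S. chi (b j)) = 0"
proof (rule sum_eq_0_if_sign_reversing_injection[OF _ assms(7)])
  show "finite A"
    by (rule finite_subset[OF assms(6)]) (simp add: finite_PiE assms(3))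
  have "coprime t (int q)"
    using assms(2) dirichlet_char_eq_0_iff[OF assms(1), of t] by simp
  then show "inj_on (scale_residues q t T) A"
    by (rule inj_on_subset[OF inj_on_scale_residues[OF _ assms(4)] assms(6)])
  show "(\<Prod>j\<in>S. chi (scale_residues q t T b j)) = - (\<Prod>j\<in>S. chi (b j))" for b
    using prod_char_scale_residues[OF assms(1-4)] assms(5) by simp
qed

lemma admissible_scale_residues:
  assumes "admissible q S a b" "\<forall>j\<in>S. a j \<noteq> 0"
  shows "admissible q S a (scale_residues q t S b)"
proof -
  obtain n d where nd: "\<And>j. j \<in> S \<Longrightarrow>
      a j dvd n + int j * d \<and> [(n + int j * d) div a j = b j] (mod int q)"
    using assms(1) unfolding admissible_def by blast
  have "a j dvd t * n + int j * (t * d) \<and>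
      [(t * n + int j * (t * d)) div a j = scale_residues q t S b j] (mod int q)"
    if j: "j \<in> S" for j
  proof -
    have split: "t * n + int j * (t * d) = t * (n + int j * d)" by (simp add: algebra_simps)
    have dv: "a j dvd n + int j * d" using nd j by blast
    have "[t * ((n + int j * d) div a j) = t * b j] (mod int q)"
      using nd j by (simp add: cong_scalar_left)
    then have "[t * ((n + int j * d) div a j) = scale_residues q t S b j] (mod int q)"
      using j by (simp add: scale_residues_def cong_def)
    with dv show ?thesis unfolding split by (simp add: div_mult_swap)
  qed
  then show ?thesis unfolding admissible_def by blast
qed

text \<open>Solve n + i d = a_i b_i and n + j d = a_j y with y = b_j (mod q): the choice
  y = b_j + q u c, where u inverts a_j q modulo j - i, makes j - i divide a_j y - a_i b_i.\<close>

lemma admissible_pair: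
  fixes i j :: nat and a b :: "nat \<Rightarrow> int"
  assumes "i < j" "coprime (int j - int i) (int q)" "a i \<noteq> 0" "a j \<noteq> 0" "a j dvd int q"
  shows "admissible q {i, j} a b"
proof -
  define m where "m = int j - int i"
  have "coprime (a j) m"
    using assms(2,5) unfolding m_def by (meson coprime_commute coprime_divisors dvd_refl)
  then have "coprime (a j * int q) m"
    using assms(2) unfolding m_def by (simp add: coprime_commute)
  then obtain u where u: "[a j * int q * u = 1] (mod m)"
    using cong_solve_coprime_int by blast
  define c where "c = a i * b i - a j * b j"
  define y where "y = b j + int q * (u * c)"
  have "[a j * y - a i * b i = a j * b j - a i * b i + (a j * int q * u) * c] (mod m)"
    unfolding y_def by (simp add: algebra_simps)
  also have "[a j * b j - a i * b i + (a j * int q * u) * c = a j * b j - a i * b i + 1 * c] (mod m)"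
    using u by (intro cong_add cong_mult) auto
  finally have "m dvd a j * y - a i * b i"
    unfolding c_def by (simp add: cong_0_iff)
  then obtain d where d: "a j * y - a i * b i = m * d" by blast
  define n where "n = a i * b i - int i * d"
  have ni: "n + int i * d = a i * b i" unfolding n_def by simp
  have nj: "n + int j * d = a j * y" using d unfolding n_def m_def by (simp add: algebra_simps)
  have "[y = b j] (mod int q)" unfolding y_def by (simp add: cong_def)
  with ni nj assms(3,4) have "\<forall>k\<in>{i, j}. a k dvd n + int k * d \<and>
      [(n + int k * d) div a k = b k] (mod int q)"
    by auto
  then show ?thesis unfolding admissible_def by blast
qed

theorem lemma6p2:
  fixes q :: nat and chi :: "int \<Rightarrow> complex" and f :: "nat \<Rightarrow> int"
    and S :: "nat set" and a :: "nat \<Rightarrow> int"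
  assumes "q \<ge> 5" and "coprime q 6"
    and "primitive_dirichlet_char q chi" and "real_char chi"
    and "multiplicative_fn f" and "\<forall>n. f n \<in> {-1, 1}"
    and "pdist_finite (\<lambda>n. of_int (f n)) (\<lambda>n. chi (int n))"
    and "S \<subseteq> {0, 1, 2, 3}" and "card S = 2 \<or> card S = 3"
    and "\<forall>j\<in>S. a j > 0 \<and> a j dvd int q"
  shows "Xi q chi S a = 0"
proof -
  have dc: "dirichlet_char q chi"
    using assms(3) unfolding primitive_dirichlet_char_def by blast
  obtain t where t: "chi t = -1"
    using real_primitive_char_has_minus_one[OF assms(3,4)] assms(1) by auto
  define box where "box = PiE S (\<lambda>_. {0..<int q})"
  define A where "A = {b \<in> box. admissible q S a b}"
  have fin: "finite S" using assms(8) finite_subset by blast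
  have box_closed: "scale_residues q t T ` box \<subseteq> box" if "T \<subseteq> S" for T
    unfolding box_def using assms(1) that by (intro image_subsetI scale_residues_in_PiE) auto
  have "(\<Sum>b\<in>A. \<Prod>j\<in>S. chi (b j)) = 0"
    using assms(9)
  proof
    assume "card S = 2"
    then obtain i j where ij: "S = {i, j}" "i < j"
      by (metis card_2_iff insert_commute linorder_neqE_nat)
    then have "int j - int i dvd 6" using assms(8) by auto
    then have "coprime (int j - int i) (int q)"
      using assms(2) by (metis coprime_divisors coprime_int_iff dvd_refl of_nat_numeral coprime_commute)
    then have "A = box"
      using admissible_pair[OF ij(2)] assms(10) ij(1) unfolding A_def by force
    then show ?thesis
      using sum_prod_char_eq_0_if_scaling_closed[OF dc t fin, of "{i}" A] box_closed[of "{i}"] ij(1)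
      unfolding box_def by simp
  next
    assume "card S = 3"
    moreover have "scale_residues q t S ` A \<subseteq> A"
      using box_closed admissible_scale_residues assms(10) unfolding A_def by fastforce
    ultimately show ?thesis
      using sum_prod_char_eq_0_if_scaling_closed[OF dc t fin, of S A] unfolding A_def box_def by auto
  qed
  then show ?thesis unfolding Xi_def A_def box_def .
qed

end
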